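(* Let $\mathbb{F}_q$ be a finite field with $q\neq 2$ and let $\mathcal{M}=\mathbb{F}_q\times\mathbb{F}_q^{*}\times\mathbb{F}_q$ with the relation: $(x_1,y_1,z_1)$ and $(x_2,y_2,z_2)$ commute iff $x_1y_2-y_1x_2=z_1-z_2$. Then $\omega(\mathcal{M})\ge 2q$.
   Context: $\omega(\mathcal{M})$ is the maximum cardinality of a subset of $\mathcal{M}$ no two distinct elements of which commute. *)

theory Defs
  imports Main
begin

definition omega :: "('b \<Rightarrow> 'b \<Rightarrow> bool) \<Rightarrow> 'b set \<Rightarrow> nat" where
  "omega comm X = Max {card S | S. S \<subseteq> X \<and> (\<forall>a\<in>S. \<forall>b\<in>S. a \<noteq> b \<longrightarrow> \<not> comm a b)}"

definition Mset :: "('a::field \<times> 'a \<times> 'a) set" where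
  "Mset = {(x, y, z). y \<noteq> 0}"

definition mcomm :: "('a::field \<times> 'a \<times> 'a) \<Rightarrow> ('a \<times> 'a \<times> 'a) \<Rightarrow> bool" where
  "mcomm p1 p2 = (case p1 of (x1, y1, z1) \<Rightarrow> case p2 of (x2, y2, z2) \<Rightarrow>
      x1 * y2 - y1 * x2 = z1 - z2)"

end

theory Submission
  imports Defs
begin

text \<open>Pick c \<notin> {0, 1}. The lines a \<mapsto> (a, 1, a c) and b \<mapsto> (b, c, b - 1) each consist of q
  pairwise non-commuting elements of \<M>, because two points on one line commute only if
  (a - b)(1 - c) = 0; and no point of the first line commutes with a point of the second,
  because the defining equation reduces to 0 = 1.\<close>

lemma card_le_omega:
  assumes "finite X" "S \<subseteq> X" "\<forall>a\<in>S. \<forall>b\<in>S. a \<noteq> b \<longrightarrow> \<not> comm a b"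
  shows "card S \<le> omega comm X"
proof -
  let ?K = "{card S | S. S \<subseteq> X \<and> (\<forall>a\<in>S. \<forall>b\<in>S. a \<noteq> b \<longrightarrow> \<not> comm a b)}"
  have "?K \<subseteq> {..card X}"
    using \<open>finite X\<close> by (auto intro: card_mono)
  then have "finite ?K"
    by (rule finite_subset) simp
  moreover have "card S \<in> ?K"
    using assms(2,3) by blast
  ultimately show ?thesis
    unfolding omega_def by (rule Max_ge)
qed

lemma exists_neq_zero_one:
  assumes "card (UNIV :: 'a set) \<noteq> 2"
  obtains c :: "'a::zero_neq_one" where "c \<noteq> 0" "c \<noteq> 1"
proof -
  have "(UNIV :: 'a set) \<noteq> {0, 1}"
    using assms by (metis card_2_iff zero_neq_one)
  then show ?thesis
    using that by auto
qed

lemma mcomm_sym: "mcomm p q \<longleftrightarrow> mcomm q p"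
  by (cases p; cases q) (auto simp: mcomm_def algebra_simps)

lemma mcomm_same_line_iff:
  fixes a b c d e :: "'a::field"
  shows "mcomm (a, c, a * d + e) (b, c, b * d + e) \<longleftrightarrow> (a - b) * (c - d) = 0"
  by (auto simp: mcomm_def algebra_simps)

lemma not_mcomm_lines:
  fixes a b c :: "'a::field"
  shows "\<not> mcomm (a, 1, a * c) (b, c, b - 1)"
  by (simp add: mcomm_def algebra_simps)

definition two_lines :: "'a::field \<Rightarrow> ('a \<times> 'a \<times> 'a) set" where
  "two_lines c = range (\<lambda>a. (a, 1, a * c)) \<union> range (\<lambda>b. (b, c, b - 1))"

lemma two_lines_subset_Mset:
  assumes "c \<noteq> 0"
  shows "two_lines c \<subseteq> Mset"
  using assms by (auto simp: two_lines_def Mset_def)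

lemma card_two_lines:
  assumes "c \<noteq> (1 :: 'a::{field, finite})"
  shows "card (two_lines c) = 2 * card (UNIV :: 'a set)"
proof -
  have "range (\<lambda>a. (a, 1, a * c)) \<inter> range (\<lambda>b. (b, c, b - 1)) = {}"
    using assms by auto
  moreover have "card (range (\<lambda>a. (a, 1::'a, a * c))) = card (UNIV :: 'a set)"
    by (rule card_image) (simp add: inj_on_def)
  moreover have "card (range (\<lambda>b::'a. (b, c, b - 1))) = card (UNIV :: 'a set)"
    by (rule card_image) (simp add: inj_on_def)
  ultimately show ?thesis
    unfolding two_lines_def by (simp add: card_Un_disjoint)
qed

lemma two_lines_pairwise_not_mcomm:
  fixes c :: "'a::field"
  assumes "c \<noteq> 1"
  shows "\<forall>p\<in>two_lines c. \<forall>q\<in>two_lines c. p \<noteq> q \<longrightarrow> \<not> mcomm p q"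
proof (intro ballI impI)
  fix p q
  assume "p \<in> two_lines c" "q \<in> two_lines c" "p \<noteq> q"
  have first_line: "\<not> mcomm (a, 1, a * c) (b, 1, b * c)" if "a \<noteq> b" for a b
    using mcomm_same_line_iff[of a 1 c 0 b] that assms by simp
  have second_line: "\<not> mcomm (a, c, a - 1) (b, c, b - 1)" if "a \<noteq> b" for a b
    using mcomm_same_line_iff[of a c 1 "-1" b] that assms by simp
  from \<open>p \<in> two_lines c\<close> \<open>q \<in> two_lines c\<close> consider
      a b where "p = (a, 1, a * c)" "q = (b, 1, b * c)"
    | a b where "p = (a, 1, a * c)" "q = (b, c, b - 1)"
    | a b where "p = (b, c, b - 1)" "q = (a, 1, a * c)"
    | a b where "p = (a, c, a - 1)" "q = (b, c, b - 1)"
    unfolding two_lines_def by blast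
  then show "\<not> mcomm p q"
  proof cases
    case 1
    then show ?thesis using \<open>p \<noteq> q\<close> first_line by simp
  next
    case 2
    then show ?thesis using not_mcomm_lines by simp
  next
    case 3
    then show ?thesis using not_mcomm_lines mcomm_sym by metis
  next
    case 4
    then show ?thesis using \<open>p \<noteq> q\<close> second_line by simp
  qed
qed

theorem lemma6p3:
  assumes "card (UNIV :: 'a::{field, finite} set) \<noteq> 2"
  shows "2 * card (UNIV :: 'a set) \<le> omega mcomm (Mset :: ('a \<times> 'a \<times> 'a) set)"
proof -
  obtain c :: 'a where "c \<noteq> 0" "c \<noteq> 1"
    using exists_neq_zero_one assms by blast
  have "card (two_lines c) \<le> omega mcomm (Mset :: ('a \<times> 'a \<times> 'a) set)"
    using two_lines_subset_Mset[OF \<open>c \<noteq> 0\<close>] two_lines_pairwise_not_mcomm[OF \<open>c \<noteq> 1\<close>]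
    by (rule card_le_omega[OF finite])
  then show ?thesis
    using card_two_lines[OF \<open>c \<noteq> 1\<close>] by simp
qed

end
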